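(* Let $q\in\mathbb{C}$, $q\neq0,1$, not a root of unity, and let $(R,\sigma,\theta^{*})$ be the non-commutative qsi algebra $R=\mathbb{C}\langle t,Q,Q^{-1}\rangle/(Qt-qtQ)$ with $\sigma(t^iQ^j)=q^{i+j}t^iQ^j$ and $\theta^{(1)}(t^iQ^j)=[i]_q\,t^{i-1}Q^j$ ($i\in\mathbb{N}$, $j\in\mathbb{Z}$), $\theta^{(m)}=\frac{1}{[m]_q!}(\theta^{(1)})^m$. Then $R$ is simple as a qsi algebra: the only two-sided ideals $I\subseteq R$ satisfying $\sigma(I)\subseteq I$ and $\theta^{(m)}(I)\subseteq I$ for all $m$ are $0$ and $R$.
   Context: $[m]_q=1+q+\dots+q^{m-1}$ (with $[0]_q=0$), $[m]_q!=[1]_q\cdots[m]_q$. The structure is that of a qsi algebra: $\sigma$ is the $\mathbb{C}$-algebra automorphism with $\sigma(t)=qt$, $\sigma(Q)=qQ$, and $\theta^{(1)}$ is the $\mathbb{C}$-linear map with $\theta^{(1)}(t)=1$, $\theta^{(1)}(Q)=0$ satisfying the twisted Leibniz rule $\theta^{(1)}(ab)=\theta^{(1)}(a)b+\sigma(a)\theta^{(1)}(b)$; the displayed formulas on the basis $t^iQ^j$ follow. *)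

theory Defs
  imports Complex_Main
begin

text \<open>Elements of R = C<t,Q,Q^-1>/(Qt - qtQ) are represented by their coefficient
  functions on the basis t^i Q^j (i nat, j int), required to have finite support.\<close>

definition qsupp :: "(nat \<times> int \<Rightarrow> complex) \<Rightarrow> (nat \<times> int) set" where
  "qsupp f = {x. f x \<noteq> 0}"

definition Rcar :: "(nat \<times> int \<Rightarrow> complex) set" where
  "Rcar = {f. finite (qsupp f)}"

text \<open>Multiplication: (t^a Q^b)(t^c Q^d) = q^(b c) t^(a+c) Q^(b+d), since Q t = q t Q.\<close>
definition rmul :: "complex \<Rightarrow> (nat \<times> int \<Rightarrow> complex) \<Rightarrow> (nat \<times> int \<Rightarrow> complex) \<Rightarrow> (nat \<times> int \<Rightarrow> complex)" where
  "rmul q f g = (\<lambda>(i, j). \<Sum>x\<in>qsupp f. \<Sum>y\<in>qsupp g.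
      if fst x + fst y = i \<and> snd x + snd y = j
      then f x * g y * q powi (snd x * int (fst y)) else 0)"

definition radd :: "(nat \<times> int \<Rightarrow> complex) \<Rightarrow> (nat \<times> int \<Rightarrow> complex) \<Rightarrow> (nat \<times> int \<Rightarrow> complex)" where
  "radd f g = (\<lambda>x. f x + g x)"

definition rneg :: "(nat \<times> int \<Rightarrow> complex) \<Rightarrow> (nat \<times> int \<Rightarrow> complex)" where
  "rneg f = (\<lambda>x. - f x)"

definition rzero :: "nat \<times> int \<Rightarrow> complex" where
  "rzero = (\<lambda>_. 0)"

definition qint :: "complex \<Rightarrow> nat \<Rightarrow> complex" where
  "qint q m = (\<Sum>k<m. q ^ k)"

definition qfact :: "complex \<Rightarrow> nat \<Rightarrow> complex" where
  "qfact q m = (\<Prod>k=1..m. qint q k)"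

definition qsigma :: "complex \<Rightarrow> (nat \<times> int \<Rightarrow> complex) \<Rightarrow> (nat \<times> int \<Rightarrow> complex)" where
  "qsigma q f = (\<lambda>(i, j). q powi (int i + j) * f (i, j))"

definition theta1 :: "complex \<Rightarrow> (nat \<times> int \<Rightarrow> complex) \<Rightarrow> (nat \<times> int \<Rightarrow> complex)" where
  "theta1 q f = (\<lambda>(i, j). qint q (Suc i) * f (Suc i, j))"

definition thetam :: "complex \<Rightarrow> nat \<Rightarrow> (nat \<times> int \<Rightarrow> complex) \<Rightarrow> (nat \<times> int \<Rightarrow> complex)" where
  "thetam q m f = (\<lambda>x. (1 / qfact q m) * ((theta1 q ^^ m) f x))"

definition two_sided_ideal :: "complex \<Rightarrow> (nat \<times> int \<Rightarrow> complex) set \<Rightarrow> bool" where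
  "two_sided_ideal q I \<longleftrightarrow> I \<subseteq> Rcar \<and> rzero \<in> I \<and>
     (\<forall>x\<in>I. \<forall>y\<in>I. radd x y \<in> I) \<and> (\<forall>x\<in>I. rneg x \<in> I) \<and>
     (\<forall>r\<in>Rcar. \<forall>x\<in>I. rmul q r x \<in> I \<and> rmul q x r \<in> I)"

definition qsi_ideal :: "complex \<Rightarrow> (nat \<times> int \<Rightarrow> complex) set \<Rightarrow> bool" where
  "qsi_ideal q I \<longleftrightarrow> two_sided_ideal q I \<and> (\<forall>x\<in>I. qsigma q x \<in> I) \<and>
     (\<forall>m. \<forall>x\<in>I. thetam q m x \<in> I)"

end

theory Submission
  imports Defs
begin

text \<open>If the top t-degree of a nonzero element of I is N, then theta^(N) of it is a nonzero
  Laurent polynomial in Q alone, since [N]_q! \<noteq> 0. For such an element g with Q^j0 in its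
  support, sigma(g) - q^j0 g deletes that term and multiplies every other coefficient of Q^j by
  q^j - q^j0 \<noteq> 0, because q is not a root of unity. Descending on the size of the support
  yields a monomial c Q^j with c \<noteq> 0, which is a unit of R, so I = R.\<close>

definition rmonom :: "nat \<Rightarrow> int \<Rightarrow> complex \<Rightarrow> (nat \<times> int \<Rightarrow> complex)" where
  "rmonom a b c = (\<lambda>x. if x = (a, b) then c else 0)"

lemma rmonom_in_Rcar: "rmonom a b c \<in> Rcar"
proof -
  have "qsupp (rmonom a b c) \<subseteq> {(a, b)}" by (auto simp: qsupp_def rmonom_def)
  then show ?thesis unfolding Rcar_def using finite_subset by blast
qed

lemma rmul_rmonom_left:
  assumes "g \<in> Rcar"
  shows "rmul q (rmonom a b c) g (i, j) =
     (if a \<le> i then c * g (i - a, j - b) * q powi (b * int (i - a)) else 0)"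
proof (cases "c = 0")
  case True
  then have "qsupp (rmonom a b c) = {}" by (auto simp: qsupp_def rmonom_def)
  with True show ?thesis by (simp add: rmul_def)
next
  case False
  then have supp: "qsupp (rmonom a b c) = {(a, b)}" by (auto simp: qsupp_def rmonom_def)
  have fin: "finite (qsupp g)" using assms by (simp add: Rcar_def)
  have "rmul q (rmonom a b c) g (i, j) = (\<Sum>y\<in>qsupp g.
      if a \<le> i then (if (i - a, j - b) = y then c * g y * q powi (b * int (fst y)) else 0) else 0)"
    unfolding rmul_def supp by (auto simp: rmonom_def intro!: sum.cong)
  also have "\<dots> = (if a \<le> i then c * g (i - a, j - b) * q powi (b * int (i - a)) else 0)"
    using fin by (simp add: qsupp_def)
  finally show ?thesis .
qed

lemma rmul_rmonom_one_right:
  assumes "r \<in> Rcar"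
  shows "rmul q r (rmonom 0 0 1) = r"
proof
  fix x :: "nat \<times> int"
  have supp: "qsupp (rmonom 0 0 1) = {(0, 0)}" by (auto simp: qsupp_def rmonom_def)
  have fin: "finite (qsupp r)" using assms by (simp add: Rcar_def)
  have "rmul q r (rmonom 0 0 1) x = (\<Sum>y\<in>qsupp r. if x = y then r y else 0)"
    unfolding rmul_def supp by (cases x) (auto simp: rmonom_def intro!: sum.cong)
  also have "\<dots> = r x" using fin by (auto simp: qsupp_def)
  finally show "rmul q r (rmonom 0 0 1) x = r x" .
qed

lemma rmul_rmonom_Q_inverse:
  assumes "c \<noteq> 0"
  shows "rmul q (rmonom 0 (- j) (1 / c)) (rmonom 0 j c) = rmonom 0 0 1"
proof
  fix x :: "nat \<times> int"
  obtain i k where "x = (i, k)" by (cases x)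
  with assms show "rmul q (rmonom 0 (- j) (1 / c)) (rmonom 0 j c) x = rmonom 0 0 1 x"
    by (simp add: rmul_rmonom_left[OF rmonom_in_Rcar]) (auto simp: rmonom_def)
qed

lemma qsi_idealD:
  assumes "qsi_ideal q I"
  shows "I \<subseteq> Rcar" and "rzero \<in> I"
    and "\<And>x y. x \<in> I \<Longrightarrow> y \<in> I \<Longrightarrow> radd x y \<in> I"
    and "\<And>x. x \<in> I \<Longrightarrow> rneg x \<in> I"
    and "\<And>r x. r \<in> Rcar \<Longrightarrow> x \<in> I \<Longrightarrow> rmul q r x \<in> I"
    and "\<And>x. x \<in> I \<Longrightarrow> qsigma q x \<in> I"
    and "\<And>m x. x \<in> I \<Longrightarrow> thetam q m x \<in> I"
  using assms unfolding qsi_ideal_def two_sided_ideal_def by auto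

lemma qint_nonzero:
  assumes "q \<noteq> 1" and "q ^ k \<noteq> 1"
  shows "qint q k \<noteq> 0"
  using assms by (simp add: qint_def sum_gp_strict)

lemma qfact_nonzero:
  assumes "q \<noteq> 1" and "\<forall>n::nat. n > 0 \<longrightarrow> q ^ n \<noteq> 1"
  shows "qfact q m \<noteq> 0"
  using assms qint_nonzero by (simp add: qfact_def prod_zero_iff)

lemma power_int_inj_not_root_of_unity:
  fixes q :: "'a :: field"
  assumes "q \<noteq> 0" and "\<forall>n::nat. n > 0 \<longrightarrow> q ^ n \<noteq> 1" and "q powi a = q powi b"
  shows "a = b"
proof (rule ccontr)
  assume "a \<noteq> b"
  have "q powi (a - b) = 1" and "q powi (b - a) = 1"
    using assms(1,3) by (simp_all add: power_int_diff)
  then have "q ^ nat \<bar>a - b\<bar> = 1"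
    by (cases "a - b \<ge> 0") (auto simp: power_int_def abs_if)
  moreover have "nat \<bar>a - b\<bar> > 0" using \<open>a \<noteq> b\<close> by simp
  ultimately show False using assms(2) by blast
qed

lemma funpow_theta1:
  "(theta1 q ^^ m) f (i, j) = (\<Prod>k\<in>{Suc i..i + m}. qint q k) * f (i + m, j)"
proof (induction m arbitrary: i)
  case 0
  then show ?case by simp
next
  case (Suc m)
  have "(theta1 q ^^ Suc m) f (i, j) = qint q (Suc i) * (theta1 q ^^ m) f (Suc i, j)"
    by (simp add: theta1_def)
  also have "\<dots> = qint q (Suc i) * (\<Prod>k\<in>{Suc (Suc i)..Suc i + m}. qint q k) * f (Suc i + m, j)"
    using Suc by simp
  also have "qint q (Suc i) * (\<Prod>k\<in>{Suc (Suc i)..Suc i + m}. qint q k)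
      = (\<Prod>k\<in>{Suc i..i + Suc m}. qint q k)"
    by (subst prod.atLeast_Suc_atMost[of "Suc i"]) auto
  finally show ?case by simp
qed

lemma thetam_top_degree:
  assumes "qfact q N \<noteq> 0" and "\<And>x. x \<in> qsupp f \<Longrightarrow> fst x \<le> N"
  shows "thetam q N f (i, j) = (if i = 0 then f (N, j) else 0)"
proof (cases "i = 0")
  case True
  have "(\<Prod>k\<in>{Suc 0..0 + N}. qint q k) = qfact q N" by (simp add: qfact_def)
  with True assms(1) show ?thesis by (simp add: thetam_def funpow_theta1)
next
  case False
  then have "f (i + N, j) = 0" using assms(2)[of "(i + N, j)"] by (auto simp: qsupp_def)
  with False show ?thesis by (simp add: thetam_def funpow_theta1)
qed

lemma radd_qsigma_rneg_scaled:
  assumes "g \<in> Rcar"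
  shows "radd (qsigma q g) (rneg (rmul q (rmonom 0 0 c) g)) x
    = (q powi (int (fst x) + snd x) - c) * g x"
  using rmul_rmonom_left[OF assms, of q 0 0 c "fst x" "snd x"]
  by (cases x) (simp add: radd_def rneg_def qsigma_def algebra_simps)

lemma qsi_ideal_nonzero_has_t_degree_zero_element:
  assumes "q \<noteq> 1" and "\<forall>n::nat. n > 0 \<longrightarrow> q ^ n \<noteq> 1" and "qsi_ideal q I"
    and "f \<in> I" and "f \<noteq> rzero"
  obtains g where "g \<in> I" and "qsupp g \<noteq> {}" and "qsupp g \<subseteq> {x. fst x = 0}"
proof -
  have fin: "finite (qsupp f)" using assms(4) qsi_idealD(1)[OF assms(3)] by (auto simp: Rcar_def)
  have ne: "qsupp f \<noteq> {}" using assms(5) by (auto simp: qsupp_def rzero_def)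
  define N where "N = Max (fst ` qsupp f)"
  have top: "fst x \<le> N" if "x \<in> qsupp f" for x unfolding N_def using fin that by auto
  have "N \<in> fst ` qsupp f" unfolding N_def using fin ne by simp
  then obtain j where "(N, j) \<in> qsupp f" by force
  define g where "g = thetam q N f"
  have g: "g (i, j') = (if i = 0 then f (N, j') else 0)" for i j'
    unfolding g_def using thetam_top_degree[OF qfact_nonzero[OF assms(1,2)] top] by blast
  show ?thesis
  proof
    show "g \<in> I" unfolding g_def using qsi_idealD(7)[OF assms(3) assms(4)] .
    show "qsupp g \<noteq> {}" using \<open>(N, j) \<in> qsupp f\<close> g[of 0 j] by (force simp: qsupp_def)
    show "qsupp g \<subseteq> {x. fst x = 0}"
      using g by (auto simp: qsupp_def split: if_splits)
  qed
qed

lemma qsi_ideal_t_degree_zero_contains_monomial: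
  assumes "q \<noteq> 0" and "\<forall>n::nat. n > 0 \<longrightarrow> q ^ n \<noteq> 1" and "qsi_ideal q I"
  shows "g \<in> I \<Longrightarrow> qsupp g \<noteq> {} \<Longrightarrow> qsupp g \<subseteq> {x. fst x = 0}
    \<Longrightarrow> \<exists>j c. c \<noteq> 0 \<and> rmonom 0 j c \<in> I"
proof (induction "card (qsupp g)" arbitrary: g rule: less_induct)
  case less
  have gR: "g \<in> Rcar" using less.prems qsi_idealD(1)[OF assms(3)] by auto
  obtain x0 where "x0 \<in> qsupp g" using less.prems(2) by blast
  with less.prems(3) obtain j0 where x0: "(0, j0) \<in> qsupp g" by (cases x0) auto
  show ?case
  proof (cases "qsupp g = {(0, j0)}")
    case True
    have "g = rmonom 0 j0 (g (0, j0))"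
    proof
      fix x
      show "g x = rmonom 0 j0 (g (0, j0)) x"
        using True by (cases "x = (0, j0)") (auto simp: rmonom_def qsupp_def)
    qed
    moreover have "g (0, j0) \<noteq> 0" using x0 by (simp add: qsupp_def)
    ultimately show ?thesis using less.prems by metis
  next
    case False
    define h where "h = radd (qsigma q g) (rneg (rmul q (rmonom 0 0 (q powi j0)) g))"
    have "h \<in> I"
      unfolding h_def using less.prems(1)
      by (intro qsi_idealD(3,4,5,6)[OF assms(3)] rmonom_in_Rcar)
    have h: "h x = (q powi (int (fst x) + snd x) - q powi j0) * g x" for x
      unfolding h_def using radd_qsigma_rneg_scaled[OF gR] .
    have supp_h: "qsupp h = qsupp g - {(0, j0)}"
    proof
      show "qsupp h \<subseteq> qsupp g - {(0, j0)}" using h by (auto simp: qsupp_def)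
      show "qsupp g - {(0, j0)} \<subseteq> qsupp h"
      proof
        fix x assume x: "x \<in> qsupp g - {(0, j0)}"
        with less.prems(3) obtain j where "x = (0, j)" and "j \<noteq> j0" by (cases x) auto
        then have "q powi j \<noteq> q powi j0"
          using power_int_inj_not_root_of_unity[OF assms(1,2)] by blast
        with x \<open>x = (0, j)\<close> h show "x \<in> qsupp h" by (simp add: qsupp_def)
      qed
    qed
    have "card (qsupp h) < card (qsupp g)"
      unfolding supp_h using gR x0 by (intro card_Diff1_less) (auto simp: Rcar_def)
    moreover have "qsupp h \<noteq> {}" using supp_h False x0 by auto
    moreover have "qsupp h \<subseteq> {x. fst x = 0}" using supp_h less.prems by auto
    ultimately show ?thesis using less.hyps \<open>h \<in> I\<close> by blast
  qed
qed

lemma qsi_ideal_with_Q_monomial_is_Rcar: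
  assumes "qsi_ideal q I" and "c \<noteq> 0" and "rmonom 0 j c \<in> I"
  shows "I = Rcar"
proof -
  have one: "rmonom 0 0 1 \<in> I"
    using qsi_idealD(5)[OF assms(1) rmonom_in_Rcar assms(3)] rmul_rmonom_Q_inverse[OF assms(2)]
    by metis
  have "r \<in> I" if "r \<in> Rcar" for r
    using qsi_idealD(5)[OF assms(1) that one] rmul_rmonom_one_right[OF that] by simp
  with qsi_idealD(1)[OF assms(1)] show ?thesis by blast
qed

theorem mainTheorem4:
  fixes q :: complex and I :: "(nat \<times> int \<Rightarrow> complex) set"
  assumes "q \<noteq> 0" and "q \<noteq> 1" and "\<forall>n::nat. n > 0 \<longrightarrow> q ^ n \<noteq> 1"
    and "qsi_ideal q I"
  shows "I = {rzero} \<or> I = Rcar"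
proof (cases "I \<subseteq> {rzero}")
  case True
  then show ?thesis using qsi_idealD(2)[OF assms(4)] by blast
next
  case False
  then obtain f where "f \<in> I" and "f \<noteq> rzero" by blast
  then obtain g where "g \<in> I" and "qsupp g \<noteq> {}" and "qsupp g \<subseteq> {x. fst x = 0}"
    using qsi_ideal_nonzero_has_t_degree_zero_element[OF assms(2-4)] by blast
  then obtain j c where "c \<noteq> 0" and "rmonom 0 j c \<in> I"
    using qsi_ideal_t_degree_zero_contains_monomial[OF assms(1,3,4)] by blast
  then show ?thesis using qsi_ideal_with_Q_monomial_is_Rcar[OF assms(4)] by blast
qed

end
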